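(* Let $S=\{1,\ldots,n\}$, $\boldsymbol{P}(S)$ the set of partitions of $S$, and $\varrho(\mathcal{B})\ge0$ for $\mathcal{B}\in\boldsymbol{P}(S)$. Consider curves $a_t=\sum_{\mathcal{A}\in\boldsymbol{P}(S)}a_t(\mathcal{A})\,\mathcal{A}\in\mathbb{R}^{\boldsymbol{P}(S)}$ with initial value $a_0(\underline{1})=1$ and $a_0(\mathcal{A})=0$ for $\mathcal{A}\ne\underline 1$, where $\underline 1=\{S\}$. Then $a_t$ solves the system \[ \dot{a}_t = -\sum_{\mathcal{A}} \sum_{\mathcal{B}} \varrho(\mathcal{B})\, a_t(\mathcal{A})\, \mathcal{A} + \sum_{\mathcal{A}} \sum_{\mathcal{B} \succcurlyeq \mathcal{A}} \Bigg ( \prod_{i=1}^{|\mathcal{B}|}\sum_{\substack{\mathcal{C} \in \boldsymbol{P}(S) \\ \mathcal{C}|_{B_i} = \mathcal{A}|_{B_i}}} a_t(\mathcal{C}) \Bigg) \varrho (\mathcal{B})\, \mathcal{A} \] if and only if it solves the law of mass action of the chemical reaction network on species set $\boldsymbol{P}(S)$ consisting of the reactions \[ \sum_{j=1}^{|\mathcal{C}|}\mathcal{A}_j\xrightarrow{\ \varrho(\mathcal{C})/|\mathcal{C}|\ }\sum_{j=1}^{|\mathcal{C}|}\bigcup_{i=1}^{|\mathcal{C}|}\mathcal{A}_{i+j-1}|_{C_i}, \] one for every $\mathcal{C}=\{C_1,\ldots,C_{|\mathcal{C}|}\}\in\boldsymbol{P}(S)$ and every tuple $(\mathcal{A}_1,\ldots,\mathcal{A}_{|\mathcal{C}|})\in\boldsymbol{P}(S)^{|\mathcal{C}|}$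 (indices mod $|\mathcal{C}|$), namely \[ \dot{a}_t = \sum_{\mathcal{C}} \sum_{\mathcal{A}_1,\ldots,\mathcal{A}_{|\mathcal{C}|}} \frac{\varrho(\mathcal{C})}{|\mathcal{C}|}\, a_t (\mathcal{A}_1) \cdots a_t(\mathcal{A}_{|\mathcal{C}|}) \sum_{j = 1}^{|\mathcal{C}|} \Big ( \bigcup_{i=1}^{|\mathcal{C}|} \mathcal{A}_{i + j - 1}|_{C_i}- \mathcal{A}_j \Big ), \] all sums running over $\boldsymbol{P}(S)$.
   Context: A partition of $S$ is a set of pairwise disjoint nonempty blocks with union $S$; blocks of $\mathcal{B}$ are enumerated $B_1,\ldots,B_{|\mathcal{B}|}$ so that $B_1\ni1$ and $B_k$ contains the smallest element not in $B_1\cup\cdots\cup B_{k-1}$. $\mathcal{A}\preccurlyeq\mathcal{B}$ (equivalently $\mathcal{B}\succcurlyeq\mathcal{A}$) means every block of $\mathcal{A}$ is contained in a block of $\mathcal{B}$. For $U\subseteq S$, $\mathcal{A}|_U=\{A\cap U:A\in\mathcal{A}\}\setminus\{\varnothing\}$; a union $\bigcup_i\mathcal{A}_{i+j-1}|_{C_i}$ of partitions of the disjoint blocks $C_i$ is a partition of $S$. Vectors in $\mathbb{R}^{\boldsymbol{P}(S)}$ are formal sums with each partition identified with a standard basis vector. The law of mass action of a network of reactions $r_1+\cdots+r_m\xrightarrow{\kappa}s_1+\cdots+s_m$ is $\dot c_t=\sum\kappa\,c_t(r_1)\cdots c_t(r_m)(s_1+\cdots+s_m-r_1-\cdots-r_m)$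 summed over all reactions. *)

theory Defs
  imports "HOL-Analysis.Analysis" "HOL-Library.Disjoint_Sets"
begin

definition ground :: "nat \<Rightarrow> nat set" where
  "ground n = {1..n}"

definition parts :: "nat \<Rightarrow> nat set set set" where
  "parts n = {P. partition_on (ground n) P}"

definition one_part :: "nat \<Rightarrow> nat set set" where
  "one_part n = {ground n}"

definition coarser :: "nat set set \<Rightarrow> nat set set \<Rightarrow> bool" where
  "coarser A B \<longleftrightarrow> (\<forall>X\<in>A. \<exists>Y\<in>B. X \<subseteq> Y)"

definition restr :: "nat set set \<Rightarrow> nat set \<Rightarrow> nat set set" where
  "restr A U = (\<lambda>X. X \<inter> U) ` A - {{}}"

text \<open>Blocks enumerated B_1, B_2, ... (0-indexed here) by increasing minimum element,
  i.e. B_1 contains the least element and B_k contains the least element not in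
  B_1 \<union> ... \<union> B_{k-1}.\<close>
definition blocks :: "nat set set \<Rightarrow> nat set list" where
  "blocks B = map (\<lambda>m. THE X. X \<in> B \<and> Min X = m) (sorted_list_of_set (Min ` B))"

definition rhs1 :: "nat \<Rightarrow> (nat set set \<Rightarrow> real) \<Rightarrow> (nat set set \<Rightarrow> real) \<Rightarrow> nat set set \<Rightarrow> real" where
  "rhs1 n \<rho> a A =
     - (\<Sum>B\<in>parts n. \<rho> B) * a A
     + (\<Sum>B\<in>{B\<in>parts n. coarser A B}.
          (\<Prod>Bi\<in>B. \<Sum>C\<in>{C\<in>parts n. restr C Bi = restr A Bi}. a C) * \<rho> B)"

definition tuples :: "nat \<Rightarrow> nat \<Rightarrow> nat set set list set" where
  "tuples n k = {xs. length xs = k \<and> set xs \<subseteq> parts n}"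

text \<open>Product partition of reaction for C, tuple xs and shift j (0-indexed):
  the union over i of A_{i+j-1}|_{C_i}, indices mod |C|.\<close>
definition product_part :: "nat set set \<Rightarrow> nat set set list \<Rightarrow> nat \<Rightarrow> nat set set" where
  "product_part C xs j =
     (let k = card C; cs = blocks C in
      \<Union>i\<in>{..<k}. restr (xs ! ((i + j) mod k)) (cs ! i))"

definition rhs2 :: "nat \<Rightarrow> (nat set set \<Rightarrow> real) \<Rightarrow> (nat set set \<Rightarrow> real) \<Rightarrow> nat set set \<Rightarrow> real" where
  "rhs2 n \<rho> a D =
     (\<Sum>C\<in>parts n. \<Sum>xs\<in>tuples n (card C).
        \<rho> C / real (card C) * (\<Prod>j<card C. a (xs ! j)) *
        (\<Sum>j<card C. (if product_part C xs j = D then 1 else 0)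
                      - (if xs ! j = D then 1 else 0)))"

definition solves :: "nat \<Rightarrow> ((nat set set \<Rightarrow> real) \<Rightarrow> nat set set \<Rightarrow> real) \<Rightarrow> (real \<Rightarrow> nat set set \<Rightarrow> real) \<Rightarrow> bool" where
  "solves n F a \<longleftrightarrow>
     (\<forall>t\<ge>0. \<forall>A\<in>parts n. ((\<lambda>s. a s A) has_real_derivative F (a t) A) (at t within {0..}))"

end

theory Submission
  imports Defs
begin

(*
  Write m = sum_A a(A) for the total mass and
    recomb C D = [D <= C] * prod_{Y in C} sum_{X|_Y = D|_Y} a(X)
  for the recombination gain.  The first system is sum_C rho(C) (recomb C D - a(D)).  In the
  mass-action law, rotating the tuple of reactants turns the j-th product into the first one
  without changing its weight, and the sum over tuples then factorises over the blocks of C;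
  this gives sum_C rho(C) (recomb C D - a(D) m^(|C|-1)).  So the two right-hand sides agree
  whenever m = 1.  Every reaction conserves the number of molecules, hence m' = 0 along the
  mass-action law, while along the first system m' = (m - 1) g(m) for a polynomial g.  In both
  cases m - 1 solves a linear equation with initial value 0, so m = 1 for all t >= 0.
*)

lemma linear_ode_zero_unique:
  fixes u h :: "real \<Rightarrow> real"
  assumes u': "\<And>t. t \<ge> 0 \<Longrightarrow> (u has_real_derivative u t * h t) (at t within {0..})"
    and h: "continuous_on {0..} h" and u0: "u 0 = 0" and T: "T \<ge> 0"
  shows "u T = 0"
proof -
  define H where "H t = integral {0..t} h" for t
  have H': "(H has_real_derivative h t) (at t within {0..T})" if "t \<in> {0..T}" for t
    unfolding H_def using that continuous_on_subset[OF h]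
    by (intro integral_has_real_derivative) auto
  have "((\<lambda>t. u t * exp (- H t)) has_real_derivative 0) (at t within {0..T})" if t: "t \<in> {0..T}" for t
  proof -
    have "(u has_real_derivative u t * h t) (at t within {0..T})"
      using t by (intro has_field_derivative_subset[OF u']) auto
    moreover have "((\<lambda>t. exp (- H t)) has_real_derivative exp (- H t) * - h t) (at t within {0..T})"
      using DERIV_chain2[OF DERIV_exp DERIV_minus[OF H'[OF t]]] by (simp add: mult.commute)
    ultimately show ?thesis
      using DERIV_mult' by fastforce
  qed
  then obtain c where c: "\<forall>t\<in>{0..T}. u t * exp (- H t) = c"
    using has_field_derivative_zero_constant[OF convex_real_interval(5)] by blast
  have "c = 0" using c u0 T by force
  then show ?thesis using c T by simp
qed

lemma sum_lists_prod_nth: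
  fixes f :: "nat \<Rightarrow> 'a \<Rightarrow> 'b::comm_semiring_1"
  assumes "finite A"
  shows "(\<Sum>xs\<in>{xs. length xs = k \<and> set xs \<subseteq> A}. \<Prod>i<k. f i (xs ! i)) = (\<Prod>i<k. \<Sum>x\<in>A. f i x)"
proof -
  have "(\<Prod>i<k. \<Sum>x\<in>A. f i x) = (\<Sum>g\<in>PiE {..<k} (\<lambda>_. A). \<Prod>i<k. f i (g i))"
    using assms by (intro prod_sum_PiE) auto
  also have "\<dots> = (\<Sum>xs\<in>{xs. length xs = k \<and> set xs \<subseteq> A}. \<Prod>i<k. f i (xs ! i))"
    by (rule sum.reindex_bij_witness[of _ "\<lambda>xs. restrict ((!) xs) {..<k}" "\<lambda>g. map g [0..<k]"])
      (auto simp: PiE_def extensional_def set_conv_nth intro: nth_equalityI)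
  finally show ?thesis ..
qed

lemma prod_lessThan_if_eq:
  fixes c m :: "'a::comm_monoid_mult"
  assumes "j < k"
  shows "(\<Prod>i<k. if i = j then c else m) = c * m ^ (k - 1)"
proof -
  have "{..<k} \<inter> {i. i = j} = {j}" "card ({..<k} \<inter> - {i. i = j}) = k - 1"
    using assms by (auto simp: Diff_eq[symmetric])
  then show ?thesis by (simp add: prod.If_cases)
qed

lemma prod_if_all:
  fixes g :: "'b \<Rightarrow> 'a::comm_semiring_1"
  assumes "finite I"
  shows "(\<Prod>i\<in>I. if P i then g i else 0) = (if \<forall>i\<in>I. P i then prod g I else 0)"
proof (cases "\<forall>i\<in>I. P i")
  case False
  then have "\<exists>i\<in>I. (if P i then g i else 0) = 0" by auto
  with False show ?thesis using prod_zero[OF assms] by simp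
qed (auto intro: prod.cong)

lemma prod_list_map_rotate:
  fixes f :: "'a \<Rightarrow> 'b::comm_monoid_mult"
  shows "prod_list (map f (rotate j xs)) = prod_list (map f xs)"
proof -
  let ?m = "j mod length xs"
  have "prod_list (map f (rotate j xs)) = prod_list (map f (drop ?m xs)) * prod_list (map f (take ?m xs))"
    by (simp add: rotate_drop_take)
  also have "\<dots> = prod_list (map f xs)"
    by (metis append_take_drop_id map_append prod_list.append mult.commute)
  finally show ?thesis .
qed

lemma prod_nth_rotate:
  fixes f :: "'a \<Rightarrow> 'b::comm_monoid_mult"
  shows "(\<Prod>i<length xs. f (rotate j xs ! i)) = (\<Prod>i<length xs. f (xs ! i))"
  using prod_list_map_rotate[of f j xs]
  by (simp add: prod.list_conv_set_nth atLeast0LessThan)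

lemma finite_parts: "finite (parts n)"
  unfolding parts_def ground_def by (rule finitely_many_partition_on) simp

lemma card_parts_ge_1:
  assumes "n \<ge> 1" "C \<in> parts n"
  shows "card C \<ge> 1"
proof -
  have "partition_on {1..n} C" using assms(2) unfolding parts_def ground_def by simp
  moreover have "{1..n} \<noteq> {}" using assms(1) by simp
  ultimately have "C \<noteq> {}" "finite C" by (auto dest: partition_onD1 intro: finite_elements)
  then show ?thesis by (simp add: Suc_le_eq card_gt_0_iff)
qed

lemma one_part_in_parts: "n \<ge> 1 \<Longrightarrow> one_part n \<in> parts n"
  unfolding one_part_def parts_def ground_def by (intro CollectI partition_on_space) auto

lemma
  assumes "partition_on A C" "finite A"
  shows distinct_blocks: "distinct (blocks C)" and set_blocks: "set (blocks C) = C"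
proof -
  have fin: "finite X" "X \<noteq> {}" if "X \<in> C" for X
    using assms that partition_onD3[OF assms(1)] by (auto intro: finite_subset dest: partition_onD1)
  have the_Min: "(THE X. X \<in> C \<and> Min X = Min Y) = Y" if "Y \<in> C" for Y
  proof (rule the_equality)
    fix X assume X: "X \<in> C \<and> Min X = Min Y"
    then have "Min Y \<in> X \<inter> Y" using fin that by (metis IntI Min_in)
    then show "X = Y" using X that partition_onD2[OF assms(1)] by (auto dest: disjointD)
  qed (use that in simp)
  have blocks: "blocks C = map (\<lambda>m. THE X. X \<in> C \<and> Min X = m) (sorted_list_of_set (Min ` C))"
    unfolding blocks_def ..
  have "finite C" using assms by (rule finite_elements[rotated])
  then show "distinct (blocks C)" "set (blocks C) = C"
    unfolding blocks by (auto simp: distinct_map inj_on_def the_Min image_image)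
qed

lemma
  assumes "C \<in> parts n"
  shows bij_betw_blocks: "bij_betw ((!) (blocks C)) {..<card C} C"
    and disjoint_family_on_blocks: "disjoint_family_on ((!) (blocks C)) {..<card C}"
    and UN_blocks: "(\<Union>i<card C. blocks C ! i) = ground n"
proof -
  have part: "partition_on (ground n) C" using assms unfolding parts_def by simp
  moreover have "finite (ground n)" unfolding ground_def by simp
  ultimately have "distinct (blocks C)" "set (blocks C) = C"
    by (simp_all add: distinct_blocks set_blocks)
  then show bij: "bij_betw ((!) (blocks C)) {..<card C} C"
    by (intro bij_betw_nth) (auto simp flip: distinct_card)
  show "disjoint_family_on ((!) (blocks C)) {..<card C}"
  unfolding disjoint_family_on_def
  proof (intro ballI impI)
    fix i j assume "i \<in> {..<card C}" "j \<in> {..<card C}" "i \<noteq> j"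
    then have "blocks C ! i \<in> C" "blocks C ! j \<in> C" "blocks C ! i \<noteq> blocks C ! j"
      using bij by (auto simp: bij_betw_def inj_on_def)
    then show "blocks C ! i \<inter> blocks C ! j = {}"
      using partition_onD2[OF part] by (auto dest: disjointD)
  qed
  show "(\<Union>i<card C. blocks C ! i) = ground n"
    using bij partition_onD1[OF part] by (simp add: bij_betw_def)
qed

lemma coarser_iff_blocks:
  assumes "C \<in> parts n"
  shows "coarser D C \<longleftrightarrow> (\<forall>Z\<in>D. \<exists>i<card C. Z \<subseteq> blocks C ! i)"
proof -
  have "(!) (blocks C) ` {..<card C} = C"
    using bij_betw_imp_surj_on[OF bij_betw_blocks[OF assms]] .
  then have "Y \<in> C \<longleftrightarrow> (\<exists>i<card C. blocks C ! i = Y)" for Y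
    by (metis image_iff lessThan_iff)
  then show ?thesis unfolding coarser_def by metis
qed

lemma partition_on_restr:
  assumes "partition_on A X" "Y \<subseteq> A"
  shows "partition_on Y (restr X Y)"
proof -
  have "restr X Y = (\<inter>) Y ` X - {{}}" unfolding restr_def by (auto simp: Int_commute)
  then show ?thesis using partition_on_restrict[OF assms(1), of Y] assms(2) by (simp add: Int_absorb2)
qed

lemma partition_on_Union_restr:
  assumes "disjoint_family_on Y {..<k}" "(\<Union>i<k. Y i) = A" "\<And>i. i < k \<Longrightarrow> partition_on A (X i)"
  shows "partition_on A (\<Union>i<k. restr (X i) (Y i))"
proof -
  have part: "partition_on (Y i) (restr (X i) (Y i))" if "i < k" for i
    using assms(2,3) that by (intro partition_on_restr) auto
  then have U: "\<Union>(restr (X i) (Y i)) = Y i" if "i < k" for i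
    using that by (simp add: partition_on_def)
  have "\<Union>(\<Union>i<k. restr (X i) (Y i)) = (\<Union>i<k. \<Union>(restr (X i) (Y i)))" by blast
  also have "\<dots> = A" using U assms(2) by simp
  moreover have "disjoint_family_on (\<lambda>i. \<Union>(restr (X i) (Y i))) {..<k}"
    using assms(1) by (simp add: disjoint_family_on_def U)
  then have "disjoint (\<Union>i<k. restr (X i) (Y i))"
    using part by (intro disjoint_UN) (auto dest: partition_onD2)
  moreover have "{} \<notin> (\<Union>i<k. restr (X i) (Y i))" unfolding restr_def by blast
  ultimately show ?thesis unfolding partition_on_def by blast
qed

lemma restr_UN: "restr (\<Union>l\<in>I. R l) Y = (\<Union>l\<in>I. restr (R l) Y)"
  unfolding restr_def by auto

lemma restr_Union_restr:
  assumes "disjoint_family_on Y {..<k}" "i < k"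
  shows "restr (\<Union>l<k. restr (X l) (Y l)) (Y i) = restr (X i) (Y i)"
proof -
  have "restr (restr (X l) (Y l)) (Y i) = (if l = i then restr (X i) (Y i) else {})" if "l < k" for l
    using assms that unfolding restr_def disjoint_family_on_def by auto
  then show ?thesis using assms(2) by (auto simp: restr_UN)
qed

lemma Union_restr_self:
  assumes disj: "disjoint_family_on Y {..<k}" and cov: "\<forall>Z\<in>D. \<exists>i<k. Z \<subseteq> Y i" and "{} \<notin> D"
  shows "(\<Union>i<k. restr D (Y i)) = D"
proof (intro equalityI subsetI)
  fix W assume "W \<in> (\<Union>i<k. restr D (Y i))"
  then obtain i Z where "i < k" "Z \<in> D" "W = Z \<inter> Y i" "W \<noteq> {}" unfolding restr_def by auto
  moreover obtain l where "l < k" "Z \<subseteq> Y l" using cov \<open>Z \<in> D\<close> by blast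
  moreover have "l = i"
    using disj \<open>i < k\<close> \<open>l < k\<close> \<open>Z \<subseteq> Y l\<close> \<open>W = Z \<inter> Y i\<close> \<open>W \<noteq> {}\<close>
    unfolding disjoint_family_on_def by blast
  ultimately show "W \<in> D" by (simp add: Int_absorb2)
next
  fix Z assume "Z \<in> D"
  moreover obtain l where "l < k" "Z \<subseteq> Y l" using cov \<open>Z \<in> D\<close> by blast
  ultimately show "Z \<in> (\<Union>i<k. restr D (Y i))"
    using \<open>{} \<notin> D\<close> unfolding restr_def by (auto intro!: bexI[of _ l] image_eqI[of _ _ Z])
qed

lemma Union_restr_eq_iff:
  assumes "disjoint_family_on Y {..<k}" "{} \<notin> D"
  shows "(\<Union>i<k. restr (X i) (Y i)) = D \<longleftrightarrow>
         (\<forall>Z\<in>D. \<exists>i<k. Z \<subseteq> Y i) \<and> (\<forall>i<k. restr (X i) (Y i) = restr D (Y i))"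
proof
  assume glued: "(\<Union>i<k. restr (X i) (Y i)) = D"
  then have "\<forall>Z\<in>D. \<exists>i<k. Z \<subseteq> Y i" unfolding restr_def by auto
  moreover have "\<forall>i<k. restr (X i) (Y i) = restr D (Y i)"
    using restr_Union_restr[OF assms(1)] glued by metis
  ultimately show "(\<forall>Z\<in>D. \<exists>i<k. Z \<subseteq> Y i) \<and> (\<forall>i<k. restr (X i) (Y i) = restr D (Y i))" ..
next
  assume "(\<forall>Z\<in>D. \<exists>i<k. Z \<subseteq> Y i) \<and> (\<forall>i<k. restr (X i) (Y i) = restr D (Y i))"
  then show "(\<Union>i<k. restr (X i) (Y i)) = D"
    using Union_restr_self[OF assms(1) _ assms(2)] by simp
qed

lemma product_part_in_parts:
  assumes "n \<ge> 1" "C \<in> parts n" "xs \<in> tuples n (card C)"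
  shows "product_part C xs j \<in> parts n"
proof -
  have "xs ! ((i + j) mod card C) \<in> parts n" if "i < card C" for i
    using assms that by (auto simp: tuples_def)
  then show ?thesis
    using disjoint_family_on_blocks[OF assms(2)] UN_blocks[OF assms(2)]
    unfolding product_part_def Let_def by (auto simp: parts_def intro: partition_on_Union_restr)
qed

lemma product_part_rotate:
  "length xs = card C \<Longrightarrow> product_part C (rotate j xs) 0 = product_part C xs j"
  unfolding product_part_def Let_def by (intro SUP_cong refl) (simp add: nth_rotate add.commute)

lemma product_part_0_eq_iff:
  assumes "C \<in> parts n" "D \<in> parts n"
  shows "product_part C xs 0 = D \<longleftrightarrow>
    coarser D C \<and> (\<forall>i<card C. restr (xs ! i) (blocks C ! i) = restr D (blocks C ! i))"
proof -
  have "{} \<notin> D" using assms(2) unfolding parts_def by (simp add: partition_onD3)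
  then show ?thesis
    unfolding product_part_def Let_def coarser_iff_blocks[OF assms(1)]
    using Union_restr_eq_iff[OF disjoint_family_on_blocks[OF assms(1)]] by simp
qed

definition mass :: "nat \<Rightarrow> (nat set set \<Rightarrow> real) \<Rightarrow> real" where
  "mass n a = (\<Sum>A\<in>parts n. a A)"

lemma mass_delta_one_part:
  assumes "n \<ge> 1" "\<forall>A\<in>parts n. x A = (if A = one_part n then 1 else 0)"
  shows "mass n x = 1"
  using assms one_part_in_parts[OF assms(1)] finite_parts unfolding mass_def
  by (simp add: sum.delta' cong: sum.cong)

definition recomb :: "nat \<Rightarrow> (nat set set \<Rightarrow> real) \<Rightarrow> nat set set \<Rightarrow> nat set set \<Rightarrow> real" where
  "recomb n a C D =
     (if coarser D C then \<Prod>Y\<in>C. \<Sum>X\<in>{X\<in>parts n. restr X Y = restr D Y}. a X else 0)"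

lemma sum_tuples_nth_eq:
  fixes a :: "nat set set \<Rightarrow> real"
  assumes "j < k" "D \<in> parts n"
  shows "(\<Sum>xs\<in>tuples n k. (\<Prod>i<k. a (xs ! i)) * (if xs ! j = D then 1 else 0))
       = a D * mass n a ^ (k - 1)"
proof -
  let ?f = "\<lambda>i X. if i \<noteq> j then a X else if X = D then a X else 0"
  have factor: "(\<Prod>i<k. a (xs ! i)) * (if xs ! j = D then 1 else 0) = (\<Prod>i<k. ?f i (xs ! i))" for xs
  proof -
    have "(\<Prod>i<k. ?f i (xs ! i))
        = (\<Prod>i<k. a (xs ! i) * (if i = j then (if xs ! j = D then 1 else 0) else 1))"
      by (intro prod.cong) auto
    then show ?thesis
      by (simp only: prod.distrib prod_lessThan_if_eq[OF assms(1)] power_one mult_1_right)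
  qed
  have "(\<Sum>xs\<in>tuples n k. \<Prod>i<k. ?f i (xs ! i)) = (\<Prod>i<k. \<Sum>X\<in>parts n. ?f i X)"
    unfolding tuples_def by (rule sum_lists_prod_nth[OF finite_parts])
  also have "\<dots> = (\<Prod>i<k. if i = j then a D else mass n a)"
    using assms(2) by (intro prod.cong) (simp_all add: mass_def finite_parts)
  finally show ?thesis by (simp add: factor prod_lessThan_if_eq[OF assms(1)])
qed

lemma sum_tuples_product_part_0_eq:
  fixes a :: "nat set set \<Rightarrow> real"
  assumes C: "C \<in> parts n" and D: "D \<in> parts n"
  shows "(\<Sum>xs\<in>tuples n (card C). (\<Prod>i<card C. a (xs ! i)) * (if product_part C xs 0 = D then 1 else 0))
       = recomb n a C D"
proof (cases "coarser D C")
  case False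
  then show ?thesis by (simp add: product_part_0_eq_iff[OF C D] recomb_def)
next
  case True
  let ?Y = "(!) (blocks C)"
  let ?f = "\<lambda>i X. if restr X (?Y i) = restr D (?Y i) then a X else 0"
  have "(\<Sum>xs\<in>tuples n (card C). (\<Prod>i<card C. a (xs ! i)) * (if product_part C xs 0 = D then 1 else 0))
      = (\<Sum>xs\<in>tuples n (card C). \<Prod>i<card C. ?f i (xs ! i))"
    using True by (intro sum.cong refl) (simp add: product_part_0_eq_iff[OF C D] prod_if_all)
  also have "\<dots> = (\<Prod>i<card C. \<Sum>X\<in>parts n. ?f i X)"
    unfolding tuples_def by (rule sum_lists_prod_nth[OF finite_parts])
  also have "\<dots> = (\<Prod>i<card C. \<Sum>X\<in>{X\<in>parts n. restr X (?Y i) = restr D (?Y i)}. a X)"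
    by (simp add: sum.inter_filter[OF finite_parts])
  also have "\<dots> = (\<Prod>Y\<in>C. \<Sum>X\<in>{X\<in>parts n. restr X Y = restr D Y}. a X)"
    by (rule prod.reindex_bij_betw[OF bij_betw_blocks[OF C]])
  finally show ?thesis using True by (simp add: recomb_def)
qed

lemma sum_tuples_product_part_eq:
  fixes a :: "nat set set \<Rightarrow> real"
  assumes C: "C \<in> parts n" and D: "D \<in> parts n" and j: "j < card C"
  shows "(\<Sum>xs\<in>tuples n (card C). (\<Prod>i<card C. a (xs ! i)) * (if product_part C xs j = D then 1 else 0))
       = recomb n a C D"
proof -
  have "(\<Sum>xs\<in>tuples n (card C). (\<Prod>i<card C. a (xs ! i)) * (if product_part C xs j = D then 1 else 0))
      = (\<Sum>xs\<in>tuples n (card C). (\<Prod>i<card C. a (xs ! i)) * (if product_part C xs 0 = D then 1 else 0))"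
  proof (rule sum.reindex_bij_witness[of _ "rotate (card C - j)" "rotate j"])
    fix xs assume "xs \<in> tuples n (card C)"
    then have len: "length xs = card C" by (simp add: tuples_def)
    then show "rotate (card C - j) (rotate j xs) = xs" "rotate j (rotate (card C - j) xs) = xs"
      using j by (simp_all add: rotate_rotate)
    show "rotate j xs \<in> tuples n (card C)" "rotate (card C - j) xs \<in> tuples n (card C)"
      using \<open>xs \<in> tuples n (card C)\<close> by (simp_all add: tuples_def)
    show "(\<Prod>i<card C. a (rotate j xs ! i)) * (if product_part C (rotate j xs) 0 = D then 1 else 0)
        = (\<Prod>i<card C. a (xs ! i)) * (if product_part C xs j = D then 1 else 0)"
      using prod_nth_rotate[of a j xs] product_part_rotate[OF len] len by simp
  qed
  then show ?thesis by (simp add: sum_tuples_product_part_0_eq[OF C D])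
qed

lemma rhs1_eq: "rhs1 n \<rho> a D = (\<Sum>C\<in>parts n. \<rho> C * (recomb n a C D - a D))"
proof -
  have "(\<Sum>C\<in>{C\<in>parts n. coarser D C}.
          (\<Prod>Y\<in>C. \<Sum>X\<in>{X\<in>parts n. restr X Y = restr D Y}. a X) * \<rho> C)
      = (\<Sum>C\<in>parts n. \<rho> C * recomb n a C D)"
    unfolding sum.inter_filter[OF finite_parts] recomb_def by (intro sum.cong) auto
  then show ?thesis
    unfolding rhs1_def by (simp add: right_diff_distrib sum_subtractf sum_distrib_right)
qed

lemma rhs2_eq:
  assumes n: "n \<ge> 1" and D: "D \<in> parts n"
  shows "rhs2 n \<rho> a D = (\<Sum>C\<in>parts n. \<rho> C * (recomb n a C D - a D * mass n a ^ (card C - 1)))"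
  unfolding rhs2_def
proof (intro sum.cong refl)
  fix C assume C: "C \<in> parts n"
  let ?k = "card C"
  let ?w = "\<lambda>xs. \<Prod>j<?k. a (xs ! j)"
  let ?gain = "\<lambda>xs j. if product_part C xs j = D then 1 else 0"
  let ?loss = "\<lambda>xs j. if xs ! j = D then 1 else 0"
  have "(\<Sum>xs\<in>tuples n ?k. \<rho> C / ?k * ?w xs * (\<Sum>j<?k. ?gain xs j - ?loss xs j))
      = \<rho> C / ?k * (\<Sum>j<?k. (\<Sum>xs\<in>tuples n ?k. ?w xs * ?gain xs j) - (\<Sum>xs\<in>tuples n ?k. ?w xs * ?loss xs j))"
    unfolding sum_subtractf[symmetric] sum_distrib_left right_diff_distrib mult.assoc
    by (rule sum.swap)
  also have "\<dots> = \<rho> C / ?k * (\<Sum>j<?k. recomb n a C D - a D * mass n a ^ (?k - 1))"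
    using sum_tuples_product_part_eq[OF C D] sum_tuples_nth_eq[OF _ D] by simp
  also have "\<dots> = \<rho> C * (recomb n a C D - a D * mass n a ^ (?k - 1))"
    using card_parts_ge_1[OF n C] by simp
  finally show "(\<Sum>xs\<in>tuples n ?k. \<rho> C / ?k * ?w xs * (\<Sum>j<?k. ?gain xs j - ?loss xs j))
      = \<rho> C * (recomb n a C D - a D * mass n a ^ (?k - 1))" .
qed

lemma rhs1_eq_rhs2_if_mass_one:
  "n \<ge> 1 \<Longrightarrow> D \<in> parts n \<Longrightarrow> mass n a = 1 \<Longrightarrow> rhs1 n \<rho> a D = rhs2 n \<rho> a D"
  by (simp add: rhs1_eq rhs2_eq)

lemma sum_rhs2_eq_0:
  assumes n: "n \<ge> 1"
  shows "(\<Sum>D\<in>parts n. rhs2 n \<rho> a D) = 0"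
proof -
  have balanced: "(\<Sum>D\<in>parts n. \<Sum>j<card C.
      (if product_part C xs j = D then 1 else 0) - (if xs ! j = D then 1 else (0::real))) = 0"
    if C: "C \<in> parts n" and xs: "xs \<in> tuples n (card C)" for C xs
  proof -
    have "xs ! j \<in> parts n" if "j < card C" for j
      using xs that by (auto simp: tuples_def)
    then show ?thesis
      using product_part_in_parts[OF n C xs] finite_parts
      by (subst sum.swap) (simp add: sum_subtractf)
  qed
  have "(\<Sum>D\<in>parts n. rhs2 n \<rho> a D) = (\<Sum>C\<in>parts n. \<Sum>xs\<in>tuples n (card C).
      \<rho> C / card C * (\<Prod>j<card C. a (xs ! j)) * (\<Sum>D\<in>parts n. \<Sum>j<card C.
        (if product_part C xs j = D then 1 else 0) - (if xs ! j = D then 1 else 0)))"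
    unfolding rhs2_def sum_distrib_left by (subst sum.swap) (intro sum.cong refl, rule sum.swap)
  also have "\<dots> = 0" by (simp add: balanced)
  finally show ?thesis .
qed

lemma sum_rhs1_eq:
  assumes n: "n \<ge> 1"
  shows "(\<Sum>D\<in>parts n. rhs1 n \<rho> a D)
       = (mass n a - 1) * (mass n a * (\<Sum>C\<in>parts n. \<rho> C * (\<Sum>i<card C - 1. mass n a ^ i)))"
proof -
  let ?c = "\<Sum>C\<in>parts n. \<rho> C * (mass n a ^ (card C - 1) - 1)"
  have "rhs1 n \<rho> a D = rhs2 n \<rho> a D + ?c * a D" if "D \<in> parts n" for D
    using rhs1_eq[of n \<rho> a D] rhs2_eq[OF n that, of \<rho> a]
    by (simp add: algebra_simps sum_subtractf sum_distrib_left sum_distrib_right sum.distrib)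
  then have "(\<Sum>D\<in>parts n. rhs1 n \<rho> a D) = ?c * mass n a"
    by (simp add: sum.distrib sum_rhs2_eq_0[OF n] mass_def sum_distrib_left)
  then show ?thesis
    by (simp add: power_diff_1_eq sum_distrib_left sum_distrib_right algebra_simps)
qed

lemma solves_mass_eq_one:
  fixes g :: "real \<Rightarrow> real"
  assumes sol: "solves n F a" and mass0: "mass n (a 0) = 1"
    and F: "\<And>x. (\<Sum>D\<in>parts n. F x D) = (mass n x - 1) * g (mass n x)"
    and g: "continuous_on UNIV g" and t: "t \<ge> 0"
  shows "mass n (a t) = 1"
proof -
  let ?m = "\<lambda>s. mass n (a s)"
  have "(?m has_real_derivative (\<Sum>D\<in>parts n. F (a s) D)) (at s within {0..})" if "s \<ge> 0" for s
    using sol that unfolding solves_def mass_def by (intro DERIV_sum) auto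
  then have m': "(?m has_real_derivative (?m s - 1) * g (?m s)) (at s within {0..})" if "s \<ge> 0" for s
    using that by (simp add: F)
  have "continuous_on {0..} ?m" by (rule DERIV_continuous_on[OF m']) simp
  then have g_m: "continuous_on {0..} (\<lambda>s. g (?m s))"
    by (rule continuous_on_compose2[OF g]) simp
  have "?m t - 1 = 0"
  proof (rule linear_ode_zero_unique[OF _ g_m _ t])
    show "((\<lambda>s. ?m s - 1) has_real_derivative (?m s - 1) * g (?m s)) (at s within {0..})"
      if "s \<ge> 0" for s
      using DERIV_diff[OF m'[OF that] DERIV_const[of 1]] by simp
  qed (simp add: mass0)
  then show ?thesis by simp
qed

theorem theorem6p1:
  fixes n :: nat and \<rho> :: "nat set set \<Rightarrow> real" and a :: "real \<Rightarrow> nat set set \<Rightarrow> real"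
  assumes "n \<ge> 1"
    and "\<forall>B\<in>parts n. \<rho> B \<ge> 0"
    and "\<forall>A\<in>parts n. a 0 A = (if A = one_part n then 1 else 0)"
  shows "solves n (rhs1 n \<rho>) a \<longleftrightarrow> solves n (rhs2 n \<rho>) a"
proof -
  note n = assms(1)
  have mass0: "mass n (a 0) = 1" using mass_delta_one_part[OF n assms(3)] .
  have "mass n (a t) = 1" if "solves n (rhs1 n \<rho>) a \<or> solves n (rhs2 n \<rho>) a" "t \<ge> 0" for t
    using that
  proof (elim disjE)
    assume sol: "solves n (rhs1 n \<rho>) a"
    let ?g = "\<lambda>m. m * (\<Sum>C\<in>parts n. \<rho> C * (\<Sum>i<card C - 1. m ^ i))"
    have "continuous_on UNIV ?g" by (intro continuous_intros)
    then show ?thesis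
      by (rule solves_mass_eq_one[OF sol mass0 sum_rhs1_eq[OF n] _ that(2)])
  next
    assume sol: "solves n (rhs2 n \<rho>) a"
    show ?thesis
      by (rule solves_mass_eq_one[where g = "\<lambda>_. 0", OF sol mass0 _ _ that(2)])
        (simp_all add: sum_rhs2_eq_0[OF n])
  qed
  then have "rhs1 n \<rho> (a t) D = rhs2 n \<rho> (a t) D"
    if "solves n (rhs1 n \<rho>) a \<or> solves n (rhs2 n \<rho>) a" "t \<ge> 0" "D \<in> parts n" for t D
    using that rhs1_eq_rhs2_if_mass_one[OF n] by simp
  then show ?thesis unfolding solves_def by auto
qed

end
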